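(* (a) For all $x\ge0$: $x^2=-\frac16[\sigma(x+2)-4\sigma(x+1)+3\sigma(x)-4]$ and $x=-\frac1{12}[\sigma(x+3)-5\sigma(x+2)+7\sigma(x+1)-3\sigma(x)+6]$, and for all $x,y\ge0$: $xy=-\frac1{12}[\sigma(x+y+2)-4\sigma(x+y+1)+3\sigma(x+y)-\sigma(x+2)+4\sigma(x+1)-3\sigma(x)-\sigma(y+2)+4\sigma(y+1)-3\sigma(y)+4]$, where $\sigma=\mathrm{ReLU}^3$. (b) Consequently, for every $\ell\in\mathbb N_+$ and $\mathbf i\in I^d$, the restriction of the multivariate B-spline $N^{(4)}_{\ell,\mathbf i}$ to $[0,1]^d$ is implemented exactly by a network with activations in $\{\mathrm{ReLU}^3\}$ of depth $\lceil\log_2 d\rceil+2$ and width at most $11d$.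
   Context: $\mathrm{ReLU}^3(x)=(\max\{x,0\})^3$. B-splines of order $k=4$: knots $t_{-3}=\dots=t_0=0$, $t_i=i/\ell$ ($0\le i\le\ell$), $t_\ell=\dots=t_{\ell+3}=1$; for $i\in I=\{-3,\dots,\ell-1\}$, $N^{(4)}_{\ell,i}(x)=(t_{i+4}-t_i)[t_i,\dots,t_{i+4}](x-t)_+^{3}$ (divided difference in $t$), $x\in[0,1]$, continuously modified at $x=1$; these are nonnegative $C^2$ piecewise cubics, each a linear combination of $(x-j/\ell)_+^3$ ($0\le j\le\ell$), $x^2$, $x$ and $1$ on $[0,1]$. Multivariate: $N^{(4)}_{\ell,\mathbf i}(\mathbf x)=\prod_{j=1}^dN^{(4)}_{\ell,i_j}(x_j)$. A network of depth $\mathcal D$, width $\mathcal W$, activations in $\Phi$ computes $f_0=x$, $(f_\ell)_i=\rho^{(\ell)}_i((A_\ell f_{\ell-1}+b_\ell)_i)$ for $\ell=1,\dots,\mathcal D-1$ ($\rho^{(\ell)}_i\in\Phi$), output $A_{\mathcal D}f_{\mathcal D-1}+b_{\mathcal D}$, with all layer sizes $\le\mathcal W$. *)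

theory Defs
  imports "HOL-Analysis.Analysis"
begin

definition relu3 :: "real \<Rightarrow> real" where
  "relu3 x = (max x 0) ^ 3"

text \<open>ddiv f t i k is the divided difference [t_i, ..., t_(i+k)] f.
  For a nondecreasing knot sequence t, if t_(i+k) = t_i all nodes coincide
  and the divided difference is the k-th derivative divided by k factorial.\<close>

fun ddiv :: "(real \<Rightarrow> real) \<Rightarrow> (int \<Rightarrow> real) \<Rightarrow> int \<Rightarrow> nat \<Rightarrow> real" where
  "ddiv f t i 0 = f (t i)"
| "ddiv f t i (Suc k) =
     (if t (i + int (Suc k)) = t i
      then (deriv ^^ Suc k) f (t i) / fact (Suc k)
      else (ddiv f t (i + 1) k - ddiv f t i k) / (t (i + int (Suc k)) - t i))"

definition knot :: "nat \<Rightarrow> int \<Rightarrow> real" where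
  "knot l j = (if j \<le> 0 then 0 else if j \<ge> int l then 1 else real_of_int j / real l)"

definition bspline4_raw :: "nat \<Rightarrow> int \<Rightarrow> real \<Rightarrow> real" where
  "bspline4_raw l i x =
     (knot l (i + 4) - knot l i) * ddiv (\<lambda>t. (max (x - t) 0) ^ 3) (knot l) i 4"

definition bspline4 :: "nat \<Rightarrow> int \<Rightarrow> real \<Rightarrow> real" where
  "bspline4 l i x =
     (if 0 < x \<and> x < 1 then bspline4_raw l i x
      else Lim (at x within {0<..<1}) (bspline4_raw l i))"

definition bspline_index :: "nat \<Rightarrow> int set" where
  "bspline_index l = {-3 .. int l - 1}"

text \<open>Multivariate tensor-product B-spline; points and multi-indices are lists of length d.\<close>

definition bspline4_multi :: "nat \<Rightarrow> int list \<Rightarrow> real list \<Rightarrow> real" where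
  "bspline4_multi l is x = (\<Prod>j<length is. bspline4 l (is ! j) (x ! j))"

definition unit_cube :: "nat \<Rightarrow> real list set" where
  "unit_cube d = {x. length x = d \<and> (\<forall>j<d. 0 \<le> x ! j \<and> x ! j \<le> 1)}"

text \<open>Affine map v \<mapsto> A v + b, matrices as lists of rows.\<close>

definition affine :: "real list list \<Rightarrow> real list \<Rightarrow> real list \<Rightarrow> real list" where
  "affine A b v = map (\<lambda>k. sum_list (map2 (*) (A ! k) v) + b ! k) [0..<length A]"

type_synonym hidden_layer = "real list list \<times> real list \<times> (real \<Rightarrow> real) list"

fun eval_hidden :: "hidden_layer list \<Rightarrow> real list \<Rightarrow> real list" where
  "eval_hidden [] v = v"
| "eval_hidden ((A, b, \<rho>) # ls) v = eval_hidden ls (map2 (\<lambda>r z. r z) \<rho> (affine A b v))"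

fun wf_hidden :: "(real \<Rightarrow> real) set \<Rightarrow> nat \<Rightarrow> nat \<Rightarrow> hidden_layer list \<Rightarrow> nat \<Rightarrow> bool" where
  "wf_hidden \<Phi> W n [] m = (m = n)"
| "wf_hidden \<Phi> W n ((A, b, \<rho>) # ls) m =
     (length A \<le> W \<and> length b = length A \<and> length \<rho> = length A \<and> set \<rho> \<subseteq> \<Phi> \<and>
      (\<forall>r\<in>set A. length r = n) \<and> wf_hidden \<Phi> W (length A) ls m)"

text \<open>F restricted to S (a set of inputs of length d) is implemented exactly by a
  scalar-output network of depth D (D affine maps, D - 1 hidden layers), width at most W
  (all layer sizes, including input and output, at most W), activations in Phi.\<close>

definition implements_on ::
  "(real \<Rightarrow> real) set \<Rightarrow> nat \<Rightarrow> nat \<Rightarrow> nat \<Rightarrow> real list set \<Rightarrow> (real list \<Rightarrow> real) \<Rightarrow> bool" where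
  "implements_on \<Phi> D W d S F \<longleftrightarrow>
     (\<exists>hs Aout bout m.
        length hs + 1 = D \<and> d \<le> W \<and> 1 \<le> W \<and>
        wf_hidden \<Phi> W d hs m \<and>
        length Aout = 1 \<and> length bout = 1 \<and> (\<forall>r\<in>set Aout. length r = m) \<and>
        (\<forall>x\<in>S. affine Aout bout (eval_hidden hs x) = [F x]))"

end

theory Submission
  imports Defs
begin

text \<open>
  On \<open>[0, \<infinity>)\<close> the activation is the cube, so the three identities of (a) are polynomial
  identities. For (b): on \<open>(0,1)\<close> the divided difference defining \<open>N\<^sub>\<ell>\<^sub>,\<^sub>i\<close> is a linear
  combination of the truncated cubes \<open>relu3 (x - t\<^sub>m)\<close>, \<open>i \<le> m \<le> i + 4\<close>, and of a quadratic
  polynomial, because knots coincide only at 0 and 1, where the derivatives of \<open>(x - t)\<^sub>+\<^sup>3\<close>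
  in \<open>t\<close> are polynomials of degree at most 2 in \<open>x\<close> or vanish; by continuity this persists on
  \<open>[0,1]\<close>. By (a), \<open>x\<close> and \<open>x\<^sup>2\<close> are affine in \<open>relu3 (x + c)\<close>, \<open>c = 0, \<dots>, 3\<close>, so a first
  hidden layer of 9 units per coordinate makes each of the \<open>d\<close> univariate factors affine in its
  outputs. As \<open>relu3 w - relu3 (-w) = w\<^sup>3\<close> and
  \<open>24ab = (a+b+1)\<^sup>3 - (a+b-1)\<^sup>3 - (a-b+1)\<^sup>3 + (a-b-1)\<^sup>3\<close>, one further hidden layer with 8 units per
  pair of factors (and 6 for a leftover factor, via \<open>6a = (a+1)\<^sup>3 + (a-1)\<^sup>3 - 2a\<^sup>3\<close>) halves the
  number of factors while keeping them affine in its outputs; after \<open>\<lceil>log\<^sub>2 d\<rceil>\<close> such layers the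
  product is affine in the last hidden layer, which is the output layer.
\<close>

section \<open>Identities for the cubic ReLU\<close>

lemma relu3_eq_cube: "z \<ge> 0 \<Longrightarrow> relu3 z = z ^ 3"
  by (simp add: relu3_def max_def)

lemma relu3_minus_relu3_uminus: "relu3 w - relu3 (- w) = w ^ 3"
  by (cases "w \<ge> 0") (auto simp: relu3_def max_def)

lemma square_eq_relu3_comb:
  fixes x :: real
  assumes "x \<ge> 0"
  shows "x ^ 2 = - (1/6) * (relu3 (x + 2) - 4 * relu3 (x + 1) + 3 * relu3 x - 4)"
  using assms by (simp add: relu3_eq_cube algebra_simps power2_eq_square power3_eq_cube)

lemma id_eq_relu3_comb:
  fixes x :: real
  assumes "x \<ge> 0"
  shows "x = - (1/12) * (relu3 (x + 3) - 5 * relu3 (x + 2) + 7 * relu3 (x + 1) - 3 * relu3 x + 6)"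
  using assms by (simp add: relu3_eq_cube algebra_simps power2_eq_square power3_eq_cube)

lemma mult_eq_relu3_comb:
  fixes x y :: real
  assumes "x \<ge> 0" "y \<ge> 0"
  shows "x * y = - (1/12) * (relu3 (x + y + 2) - 4 * relu3 (x + y + 1) + 3 * relu3 (x + y)
                            - relu3 (x + 2) + 4 * relu3 (x + 1) - 3 * relu3 x
                            - relu3 (y + 2) + 4 * relu3 (y + 1) - 3 * relu3 y + 4)"
  using assms by (simp add: relu3_eq_cube algebra_simps power2_eq_square power3_eq_cube)

lemma id_eq_cube_comb: "(a::real) = (1/6) * ((a + 1) ^ 3 + (a - 1) ^ 3 - 2 * a ^ 3)"
  by (simp add: algebra_simps power3_eq_cube)

lemma mult_eq_cube_comb:
  "(a::real) * b = (1/24) * ((a + b + 1) ^ 3 - (a + b - 1) ^ 3 - (a - b + 1) ^ 3 + (a - b - 1) ^ 3)"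
  by (simp add: algebra_simps power3_eq_cube)

section \<open>Affine combinations of functions\<close>

definition affine_comb :: "'a set \<Rightarrow> ('a \<Rightarrow> real) list \<Rightarrow> ('a \<Rightarrow> real) \<Rightarrow> bool" where
  "affine_comb S L f \<longleftrightarrow>
     (\<exists>a c. length a = length L \<and> (\<forall>x\<in>S. f x = (\<Sum>k<length L. a ! k * (L ! k) x) + c))"

lemma affine_comb_const: "affine_comb S L (\<lambda>x. c)"
  unfolding affine_comb_def by (intro exI[of _ "replicate (length L) 0"] exI[of _ c]) simp

lemma affine_comb_member:
  assumes "h \<in> set L"
  shows "affine_comb S L h"
proof -
  obtain p where p: "p < length L" "L ! p = h"
    using assms by (auto simp: in_set_conv_nth)
  define a where "a = map (\<lambda>k. if k = p then 1 else (0::real)) [0..<length L]"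
  have "(\<Sum>k<length L. a ! k * (L ! k) x) = (\<Sum>k<length L. if k = p then (L ! k) x else 0)" for x
    by (rule sum.cong) (auto simp: a_def)
  then show ?thesis
    unfolding affine_comb_def using p by (intro exI[of _ a] exI[of _ 0]) (simp add: a_def)
qed

lemma affine_comb_add:
  assumes "affine_comb S L f" "affine_comb S L g"
  shows "affine_comb S L (\<lambda>x. f x + g x)"
proof -
  obtain a c where a: "length a = length L" "\<forall>x\<in>S. f x = (\<Sum>k<length L. a ! k * (L ! k) x) + c"
    using assms(1) unfolding affine_comb_def by blast
  obtain b e where b: "length b = length L" "\<forall>x\<in>S. g x = (\<Sum>k<length L. b ! k * (L ! k) x) + e"
    using assms(2) unfolding affine_comb_def by blast
  show ?thesis
    unfolding affine_comb_def using a b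
    by (intro exI[of _ "map2 (+) a b"] exI[of _ "c + e"])
      (auto simp: sum.distrib[symmetric] algebra_simps intro!: sum.cong)
qed

lemma affine_comb_scale:
  assumes "affine_comb S L f"
  shows "affine_comb S L (\<lambda>x. r * f x)"
proof -
  obtain a c where a: "length a = length L" "\<forall>x\<in>S. f x = (\<Sum>k<length L. a ! k * (L ! k) x) + c"
    using assms unfolding affine_comb_def by blast
  show ?thesis
    unfolding affine_comb_def using a
    by (intro exI[of _ "map ((*) r) a"] exI[of _ "r * c"])
      (auto simp: sum_distrib_left algebra_simps intro!: sum.cong)
qed

lemma affine_comb_diff:
  "affine_comb S L f \<Longrightarrow> affine_comb S L g \<Longrightarrow> affine_comb S L (\<lambda>x. f x - g x)"
  using affine_comb_add[of S L f "\<lambda>x. (-1) * g x"] affine_comb_scale[of S L g "-1"] by simp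

lemma affine_comb_cong: "affine_comb S L f \<Longrightarrow> (\<And>x. x \<in> S \<Longrightarrow> f x = g x) \<Longrightarrow> affine_comb S L g"
  unfolding affine_comb_def by auto

lemma affine_comb_sum:
  "(\<And>m. m \<in> A \<Longrightarrow> affine_comb S L (f m)) \<Longrightarrow> affine_comb S L (\<lambda>x. \<Sum>m\<in>A. f m x)"
proof (induction A rule: infinite_finite_induct)
  case (insert m A)
  then show ?case by (simp add: affine_comb_add)
qed (simp_all add: affine_comb_const)

lemma affine_comb_trans:
  assumes f: "affine_comb S L f" and L: "\<And>h. h \<in> set L \<Longrightarrow> affine_comb S M h"
  shows "affine_comb S M f"
proof -
  obtain a c where a: "\<forall>x\<in>S. f x = (\<Sum>k<length L. a ! k * (L ! k) x) + c"
    using f unfolding affine_comb_def by blast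
  have "affine_comb S M (\<lambda>x. (\<Sum>k<length L. a ! k * (L ! k) x) + c)"
    by (intro affine_comb_add affine_comb_sum affine_comb_scale affine_comb_const L) simp
  then show ?thesis
    by (rule affine_comb_cong) (use a in simp)
qed

lemma affine_comb_mono: "set L \<subseteq> set M \<Longrightarrow> affine_comb S L f \<Longrightarrow> affine_comb S M f"
  by (blast intro: affine_comb_trans affine_comb_member)

lemma affine_comb_compose:
  assumes "affine_comb T L f" "\<And>x. x \<in> S \<Longrightarrow> p x \<in> T"
  shows "affine_comb S (map (\<lambda>h x. h (p x)) L) (\<lambda>x. f (p x))"
proof -
  obtain a c where "length a = length L" "\<forall>y\<in>T. f y = (\<Sum>k<length L. a ! k * (L ! k) y) + c"
    using assms(1) unfolding affine_comb_def by blast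
  then show ?thesis
    unfolding affine_comb_def using assms(2) by (intro exI[of _ a] exI[of _ c]) simp
qed

section \<open>Networks of cubic ReLU layers\<close>

definition relu3_units :: "('a \<Rightarrow> real) list \<Rightarrow> ('a \<Rightarrow> real) list" where
  "relu3_units G = map (\<lambda>g x. relu3 (g x)) G"

definition relu3_layers_compute ::
  "nat \<Rightarrow> nat \<Rightarrow> real list set \<Rightarrow> nat \<Rightarrow> (real list \<Rightarrow> real) list \<Rightarrow> bool" where
  "relu3_layers_compute W n S k L \<longleftrightarrow>
     (\<exists>hs. length hs = k \<and> wf_hidden {relu3} W n hs (length L) \<and>
        (\<forall>x\<in>S. eval_hidden hs x = map (\<lambda>h. h x) L))"

lemma eval_hidden_append:
  "eval_hidden (hs @ [(A, b, \<rho>)]) v = map2 (\<lambda>r z. r z) \<rho> (affine A b (eval_hidden hs v))"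
  by (induction hs arbitrary: v) auto

lemma wf_hidden_append:
  "wf_hidden \<Phi> W n hs m \<Longrightarrow> length A \<le> W \<Longrightarrow> length b = length A \<Longrightarrow> length \<rho> = length A \<Longrightarrow>
   set \<rho> \<subseteq> \<Phi> \<Longrightarrow> (\<forall>r\<in>set A. length r = m) \<Longrightarrow> wf_hidden \<Phi> W n (hs @ [(A, b, \<rho>)]) (length A)"
  by (induction \<Phi> W n hs m rule: wf_hidden.induct) auto

lemma sum_list_map2_times:
  "length a = length v \<Longrightarrow> sum_list (map2 (*) a v) = (\<Sum>k<length a. a ! k * v ! k)"
  by (simp add: sum_list_sum_nth atLeast0LessThan)

lemma relu3_layers_compute_coordinates:
  assumes "\<And>x. x \<in> S \<Longrightarrow> length x = n"
  shows "relu3_layers_compute W n S 0 (map (\<lambda>j x. x ! j) [0..<n])"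
  unfolding relu3_layers_compute_def using assms
  by (intro exI[of _ "[]"]) (auto intro!: nth_equalityI)

lemma relu3_layers_compute_Suc:
  assumes R: "relu3_layers_compute W n S k L" and "length G \<le> W"
    and G: "\<And>g. g \<in> set G \<Longrightarrow> affine_comb S L g"
  shows "relu3_layers_compute W n S (Suc k) (relu3_units G)"
proof -
  obtain hs where hs: "length hs = k" "wf_hidden {relu3} W n hs (length L)"
    "\<forall>x\<in>S. eval_hidden hs x = map (\<lambda>h. h x) L"
    using R unfolding relu3_layers_compute_def by blast
  have "\<forall>g\<in>set G. \<exists>ac. length (fst ac) = length L \<and>
          (\<forall>x\<in>S. g x = (\<Sum>k<length L. fst ac ! k * (L ! k) x) + snd ac)"
    using G unfolding affine_comb_def by fastforce
  then obtain F where F: "\<And>g. g \<in> set G \<Longrightarrow> length (fst (F g)) = length L \<and>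
          (\<forall>x\<in>S. g x = (\<Sum>k<length L. fst (F g) ! k * (L ! k) x) + snd (F g))"
    by metis
  define A where "A = map (fst \<circ> F) G"
  define b where "b = map (snd \<circ> F) G"
  define \<rho> where "\<rho> = replicate (length G) relu3"
  have wf: "wf_hidden {relu3} W n (hs @ [(A, b, \<rho>)]) (length (relu3_units G))"
    using wf_hidden_append[OF hs(2), of A b \<rho>] assms(2) F
    by (auto simp: A_def b_def \<rho>_def relu3_units_def set_replicate_conv_if)
  have "eval_hidden (hs @ [(A, b, \<rho>)]) x = map (\<lambda>h. h x) (relu3_units G)" if "x \<in> S" for x
  proof (rule nth_equalityI)
    fix p assume "p < length (eval_hidden (hs @ [(A, b, \<rho>)]) x)"
    then have p: "p < length G"
      by (simp add: eval_hidden_append \<rho>_def affine_def A_def)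
    with F[of "G ! p"] \<open>x \<in> S\<close> hs(3) show "eval_hidden (hs @ [(A, b, \<rho>)]) x ! p =
        map (\<lambda>h. h x) (relu3_units G) ! p"
      by (simp add: eval_hidden_append \<rho>_def affine_def A_def b_def relu3_units_def
          sum_list_map2_times)
  qed (simp add: eval_hidden_append \<rho>_def affine_def A_def relu3_units_def)
  with wf hs(1) show ?thesis
    unfolding relu3_layers_compute_def by (intro exI[of _ "hs @ [(A, b, \<rho>)]"]) auto
qed

lemma implements_on_if_affine_comb:
  assumes "relu3_layers_compute W n S k L" "affine_comb S L F" "n \<le> W" "1 \<le> W"
  shows "implements_on {relu3} (Suc k) W n S F"
proof -
  obtain hs where hs: "length hs = k" "wf_hidden {relu3} W n hs (length L)"
    "\<forall>x\<in>S. eval_hidden hs x = map (\<lambda>h. h x) L"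
    using assms(1) unfolding relu3_layers_compute_def by blast
  obtain a c where "length a = length L" "\<forall>x\<in>S. F x = (\<Sum>k<length L. a ! k * (L ! k) x) + c"
    using assms(2) unfolding affine_comb_def by blast
  with hs assms(3,4) show ?thesis
    unfolding implements_on_def
    by (intro exI[of _ hs] exI[of _ "[a]"] exI[of _ "[c]"] exI[of _ "length L"])
      (auto simp: affine_def sum_list_map2_times)
qed

section \<open>Products by layers of cubes\<close>

definition plus_minus :: "('a \<Rightarrow> real) \<Rightarrow> ('a \<Rightarrow> real) list" where
  "plus_minus g = [g, \<lambda>x. - g x]"

fun product_preacts :: "('a \<Rightarrow> real) list \<Rightarrow> ('a \<Rightarrow> real) list" where
  "product_preacts [] = []"
| "product_preacts [a] =
     plus_minus (\<lambda>x. a x + 1) @ plus_minus (\<lambda>x. a x - 1) @ plus_minus a"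
| "product_preacts (a # b # r) =
     plus_minus (\<lambda>x. a x + b x + 1) @ plus_minus (\<lambda>x. a x + b x - 1) @
     plus_minus (\<lambda>x. a x - b x + 1) @ plus_minus (\<lambda>x. a x - b x - 1) @ product_preacts r"

fun pair_products :: "('a \<Rightarrow> real) list \<Rightarrow> ('a \<Rightarrow> real) list" where
  "pair_products [] = []"
| "pair_products [a] = [a]"
| "pair_products (a # b # r) = (\<lambda>x. a x * b x) # pair_products r"

lemma length_product_preacts: "length (product_preacts V) \<le> 6 * length V"
  by (induction V rule: product_preacts.induct) (auto simp: plus_minus_def)

lemma length_pair_products: "length (pair_products V) = (length V + 1) div 2"
  by (induction V rule: pair_products.induct) auto

lemma prod_list_pair_products:
  "prod_list (map (\<lambda>w. w x) (pair_products V)) = prod_list (map (\<lambda>v. v x) V)"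
  by (induction V rule: pair_products.induct) auto

lemma affine_comb_plus_minus:
  "affine_comb S L g \<Longrightarrow> h \<in> set (plus_minus g) \<Longrightarrow> affine_comb S L h"
  using affine_comb_scale[of S L g "-1"] by (auto simp: plus_minus_def)

lemma affine_comb_product_preacts:
  "(\<And>v. v \<in> set V \<Longrightarrow> affine_comb S L v) \<Longrightarrow> g \<in> set (product_preacts V) \<Longrightarrow>
   affine_comb S L g"
proof (induction V rule: product_preacts.induct)
  case (2 a)
  then have a: "affine_comb S L a" by simp
  have "affine_comb S L (\<lambda>x. a x + 1)" "affine_comb S L (\<lambda>x. a x - 1)"
    using a by (auto intro: affine_comb_add affine_comb_diff affine_comb_const)
  with a 2(2) show ?case
    by (simp only: product_preacts.simps set_append Un_iff) (blast intro: affine_comb_plus_minus)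
next
  case (3 a b r)
  then have a: "affine_comb S L a" and b: "affine_comb S L b" by simp_all
  have "affine_comb S L (\<lambda>x. a x + b x + 1)" "affine_comb S L (\<lambda>x. a x + b x - 1)"
    "affine_comb S L (\<lambda>x. a x - b x + 1)" "affine_comb S L (\<lambda>x. a x - b x - 1)"
    using a b by (auto intro: affine_comb_add affine_comb_diff affine_comb_const)
  moreover have "g \<in> set (product_preacts r) \<Longrightarrow> affine_comb S L g"
    using 3 by simp
  ultimately show ?case
    using 3(3) by (simp only: product_preacts.simps set_append Un_iff)
      (blast intro: affine_comb_plus_minus)
qed simp

lemma affine_comb_cube:
  assumes "set (plus_minus g) \<subseteq> set G"
  shows "affine_comb S (relu3_units G) (\<lambda>x. g x ^ 3)"
proof -
  have "affine_comb S (relu3_units G) (\<lambda>x. relu3 (g x) - relu3 (- g x))"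
    using assms by (intro affine_comb_diff affine_comb_member)
      (auto simp: plus_minus_def relu3_units_def)
  then show ?thesis by (simp only: relu3_minus_relu3_uminus)
qed

lemma affine_comb_pair_products:
  "w \<in> set (pair_products V) \<Longrightarrow> affine_comb S (relu3_units (product_preacts V)) w"
proof (induction V rule: pair_products.induct)
  case (2 a)
  have "affine_comb S (relu3_units (product_preacts [a]))
      (\<lambda>x. (1/6) * ((a x + 1) ^ 3 + (a x - 1) ^ 3 - 2 * a x ^ 3))"
    by (intro affine_comb_scale affine_comb_add affine_comb_diff affine_comb_cube) auto
  with 2 show ?case by (simp only: id_eq_cube_comb[symmetric]) simp
next
  case (3 a b r)
  let ?U = "relu3_units (product_preacts (a # b # r))"
  have "affine_comb S ?U (\<lambda>x. (1/24) * ((a x + b x + 1) ^ 3 - (a x + b x - 1) ^ 3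
      - (a x - b x + 1) ^ 3 + (a x - b x - 1) ^ 3))"
    by (intro affine_comb_scale affine_comb_add affine_comb_diff affine_comb_cube) auto
  then have "affine_comb S ?U (\<lambda>x. a x * b x)"
    by (simp only: mult_eq_cube_comb[symmetric])
  moreover have "affine_comb S ?U w" if "w \<in> set (pair_products r)"
  proof (rule affine_comb_mono)
    show "set (relu3_units (product_preacts r)) \<subseteq> set ?U"
      by (auto simp: relu3_units_def)
  qed (rule "3.IH"[OF that])
  ultimately show ?case
    using "3.prems" by auto
qed simp

lemma relu3_layers_compute_prod:
  assumes "relu3_layers_compute W n S k L" "V \<noteq> []" "length V \<le> 2 ^ K" "6 * length V \<le> W"
    "\<And>v. v \<in> set V \<Longrightarrow> affine_comb S L v"
  shows "\<exists>L'. relu3_layers_compute W n S (k + K) L' \<and>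
    affine_comb S L' (\<lambda>x. prod_list (map (\<lambda>v. v x) V))"
  using assms
proof (induction K arbitrary: k L V)
  case 0
  then obtain v where "V = [v]" by (cases V) auto
  with 0 show ?case by (intro exI[of _ L]) simp
next
  case (Suc K)
  have layer: "relu3_layers_compute W n S (Suc k) (relu3_units (product_preacts V))"
  proof (rule relu3_layers_compute_Suc[OF Suc.prems(1)])
    show "length (product_preacts V) \<le> W"
      using Suc.prems(4) length_product_preacts[of V] by linarith
  qed (rule affine_comb_product_preacts[OF Suc.prems(5)])
  have "(length V + 1) div 2 \<le> length V"
    using Suc.prems(2) by (cases V) auto
  with Suc.prems(2-4) have "pair_products V \<noteq> []" "length (pair_products V) \<le> 2 ^ K"
    "6 * length (pair_products V) \<le> W"
    by (auto simp: length_pair_products simp flip: length_greater_0_conv)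
  from Suc.IH[OF layer this affine_comb_pair_products] obtain L' where
    "relu3_layers_compute W n S (Suc k + K) L'"
    "affine_comb S L' (\<lambda>x. prod_list (map (\<lambda>w. w x) (pair_products V)))"
    by blast
  then show ?case
    by (intro exI[of _ L']) (simp add: prod_list_pair_products)
qed

section \<open>Cubic B-splines as combinations of truncated cubes\<close>

lemma knot_coincide:
  assumes "l \<ge> 1" "j < j'" "knot l j = knot l j'"
  shows "knot l j = 0 \<or> knot l j = 1"
proof (rule ccontr)
  assume "\<not> ?thesis"
  then have j: "0 < j" "j < int l"
    by (auto simp: knot_def split: if_splits)
  then have "knot l j < 1"
    using assms(1) by (simp add: knot_def)
  moreover have "knot l j < knot l j'" if "j' < int l"
    using j that assms(1,2) by (simp add: knot_def divide_strict_right_mono)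
  ultimately show False
    using j assms(2,3) by (auto simp: knot_def split: if_splits)
qed

lemma deriv_scaled_power_diff:
  "deriv (\<lambda>t. c * (x - t) ^ m) = (\<lambda>t::real. - (c * real m) * (x - t) ^ (m - 1))"
  by (rule ext, rule DERIV_imp_deriv) (auto intro!: derivative_eq_intros)

lemma higher_deriv_cube:
  "(deriv ^^ n) (\<lambda>t. (x - t) ^ 3) =
     (\<lambda>t::real. (-1) ^ n * real (3 choose n) * fact n * (x - t) ^ (3 - n))"
proof (induction n)
  case (Suc n)
  have absorb: "real (3 choose Suc n) * real (Suc n) = real (3 choose n) * real (3 - n)"
    by (cases "n \<le> 3") (auto simp: le_Suc_eq numeral_3_eq_3 binomial_eq_0)
  have "(-1) ^ Suc n * real (3 choose Suc n) * fact (Suc n)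
      = - ((-1) ^ n * fact n * (real (3 choose Suc n) * real (Suc n)))"
    by (simp add: algebra_simps)
  also have "\<dots> = - ((-1) ^ n * real (3 choose n) * fact n * real (3 - n))"
    by (simp only: absorb) (simp add: algebra_simps)
  finally have "(-1) ^ Suc n * real (3 choose Suc n) * fact (Suc n)
      = - ((-1) ^ n * real (3 choose n) * fact n * real (3 - n))" .
  moreover have "3 - n - 1 = 3 - Suc n" by simp
  ultimately show ?case
    using Suc by (simp only: funpow.simps comp_def deriv_scaled_power_diff)
qed simp

definition spline_basis :: "nat \<Rightarrow> int \<Rightarrow> (real \<Rightarrow> real) list" where
  "spline_basis l i = map (\<lambda>m x. relu3 (x - knot l (i + int m))) [0..<5] @ [\<lambda>x. x, \<lambda>x. x ^ 2]"

lemma isCont_spline_basis: "h \<in> set (spline_basis l i) \<Longrightarrow> isCont h x"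
  unfolding spline_basis_def relu3_def by (auto intro!: continuous_intros)

lemma affine_comb_spline_basis_monomial:
  assumes "e \<le> 2"
  shows "affine_comb S (spline_basis l i) (\<lambda>x. c * x ^ e)"
proof -
  consider "e = 0" | "e = 1" | "e = 2"
    using assms by linarith
  then show ?thesis
  proof cases
    case 1
    then show ?thesis using affine_comb_const[of S _ c] by simp
  next
    case 2
    have "affine_comb S (spline_basis l i) (\<lambda>x. x)"
      by (intro affine_comb_member) (simp add: spline_basis_def)
    with 2 show ?thesis using affine_comb_scale[of S _ "\<lambda>x. x" c] by simp
  next
    case 3
    have "affine_comb S (spline_basis l i) (\<lambda>x. x ^ 2)"
      by (intro affine_comb_member) (simp add: spline_basis_def)
    with 3 show ?thesis using affine_comb_scale[of S _ "\<lambda>x. x ^ 2" c] by simp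
  qed
qed

lemma affine_comb_higher_deriv_truncated_cube:
  assumes "t\<^sub>0 = 0 \<or> t\<^sub>0 = 1" "n \<ge> 1"
  shows "affine_comb {0<..<1} (spline_basis l i)
           (\<lambda>x. c * (deriv ^^ n) (\<lambda>t. (max (x - t) 0) ^ 3) t\<^sub>0)"
  using assms(1)
proof
  assume t0: "t\<^sub>0 = 0"
  have eq: "(deriv ^^ n) (\<lambda>t. (max (x - t) 0) ^ 3) t\<^sub>0 =
      (-1) ^ n * real (3 choose n) * fact n * x ^ (3 - n)"
    if "x \<in> {0<..<1}" for x
  proof -
    have "\<forall>\<^sub>F t in nhds t\<^sub>0. (max (x - t) 0) ^ 3 = (x - t) ^ 3"
      unfolding eventually_nhds using that t0 by (intro exI[of _ "{..<x}"]) auto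
    then have "(deriv ^^ n) (\<lambda>t. (max (x - t) 0) ^ 3) t\<^sub>0 = (deriv ^^ n) (\<lambda>t. (x - t) ^ 3) t\<^sub>0"
      by (rule higher_deriv_cong_ev) simp
    then show ?thesis
      by (simp add: higher_deriv_cube t0)
  qed
  have "affine_comb {0<..<1} (spline_basis l i)
      (\<lambda>x. (c * ((-1) ^ n * real (3 choose n) * fact n)) * x ^ (3 - n))"
    using assms(2) by (intro affine_comb_spline_basis_monomial) simp
  then show ?thesis
    by (rule affine_comb_cong) (simp add: eq)
next
  assume t1: "t\<^sub>0 = 1"
  have "(deriv ^^ n) (\<lambda>t. (max (x - t) 0) ^ 3) t\<^sub>0 = (deriv ^^ n) (\<lambda>t. 0) t\<^sub>0"
    if "x \<in> {0<..<1}" for x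
  proof (rule higher_deriv_cong_ev)
    show "\<forall>\<^sub>F t in nhds t\<^sub>0. (max (x - t) 0) ^ 3 = 0"
      unfolding eventually_nhds using that t1 by (intro exI[of _ "{x<..}"]) auto
  qed simp
  moreover have "(deriv ^^ n) (\<lambda>t::real. 0::real) = (\<lambda>t. 0)"
    by (induction n) auto
  ultimately show ?thesis
    by (intro affine_comb_cong[OF affine_comb_const[of _ _ 0]]) simp
qed

lemma affine_comb_ddiv_truncated_cube:
  assumes "l \<ge> 1" "i \<le> j" "j + int k \<le> i + 4"
  shows "affine_comb {0<..<1} (spline_basis l i)
           (\<lambda>x. ddiv (\<lambda>t. (max (x - t) 0) ^ 3) (knot l) j k)"
  using assms(2,3)
proof (induction k arbitrary: j)
  case 0
  then obtain m where m: "m < 5" "j = i + int m"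
    by (intro that[of "nat (j - i)"]) auto
  then have "(\<lambda>x. relu3 (x - knot l j)) \<in> set (spline_basis l i)"
    unfolding spline_basis_def set_append set_map by (intro UnI1 rev_image_eqI[of m]) auto
  then show ?case
    unfolding relu3_def by (simp add: affine_comb_member)
next
  case (Suc k)
  show ?case
  proof (cases "knot l (j + int (Suc k)) = knot l j")
    case True
    then have "knot l j = 0 \<or> knot l j = 1"
      using knot_coincide[OF assms(1), of j "j + int (Suc k)"] by simp
    from affine_comb_higher_deriv_truncated_cube[OF this, of "Suc k" l i "1 / fact (Suc k)"]
    show ?thesis
      using True by (simp del: funpow.simps)
  next
    case False
    have "affine_comb {0<..<1} (spline_basis l i)
        (\<lambda>x. (1 / (knot l (j + int (Suc k)) - knot l j)) *
          (ddiv (\<lambda>t. (max (x - t) 0) ^ 3) (knot l) (j + 1) k -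
           ddiv (\<lambda>t. (max (x - t) 0) ^ 3) (knot l) j k))"
      using Suc by (intro affine_comb_scale affine_comb_diff Suc.IH) auto
    with False show ?thesis
      by (simp del: of_nat_Suc)
  qed
qed

lemma affine_comb_bspline4_raw:
  "l \<ge> 1 \<Longrightarrow> affine_comb {0<..<1} (spline_basis l i) (bspline4_raw l i)"
  unfolding bspline4_raw_def[abs_def]
  by (intro affine_comb_scale affine_comb_ddiv_truncated_cube) auto

lemma Lim_within_eq_continuous:
  assumes "isCont G x" "x islimpt T" "\<And>y. y \<in> T \<Longrightarrow> g y = G y"
  shows "Lim (at x within T) g = G x"
proof (rule tendsto_Lim)
  show "at x within T \<noteq> bot"
    using assms(2) by (simp add: trivial_limit_within)
  have "(G \<longlongrightarrow> G x) (at x within T)"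
    using assms(1) continuous_at_imp_continuous_within continuous_within by blast
  moreover have "\<forall>\<^sub>F y in at x within T. g y = G y"
    using assms(3) by (simp add: eventually_at_filter)
  ultimately show "(g \<longlongrightarrow> G x) (at x within T)"
    by (simp add: tendsto_cong)
qed

lemma affine_comb_bspline4:
  assumes "l \<ge> 1"
  shows "affine_comb {0..1} (spline_basis l i) (bspline4 l i)"
proof -
  let ?L = "spline_basis l i"
  obtain a c where a: "length a = length ?L"
    and raw: "\<forall>x\<in>{0<..<1}. bspline4_raw l i x = (\<Sum>k<length ?L. a ! k * (?L ! k) x) + c"
    using affine_comb_bspline4_raw[OF assms] unfolding affine_comb_def by blast
  define G where "G x = (\<Sum>k<length ?L. a ! k * (?L ! k) x) + c" for x
  have "isCont G x" for x
    unfolding G_def by (intro continuous_intros isCont_spline_basis[of _ l i]) simp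
  have "bspline4 l i x = G x" if "x \<in> {0..1}" for x
  proof (cases "0 < x \<and> x < 1")
    case True
    with raw show ?thesis by (simp add: bspline4_def G_def)
  next
    case False
    with that have "x islimpt {0<..<1::real}"
      using islimpt_greaterThanLessThan1[of "0::real" 1] islimpt_greaterThanLessThan2[of "0::real" 1]
      by auto
    with \<open>isCont G x\<close> have "Lim (at x within {0<..<1}) (bspline4_raw l i) = G x"
      by (rule Lim_within_eq_continuous) (use raw in \<open>simp add: G_def\<close>)
    then show ?thesis
      unfolding bspline4_def by (subst if_not_P[OF False])
  qed
  moreover have "affine_comb {0..1} ?L G"
    unfolding affine_comb_def G_def using a by blast
  ultimately show ?thesis
    by (auto intro: affine_comb_cong)
qed

definition bspline_preacts :: "nat \<Rightarrow> int \<Rightarrow> (real \<Rightarrow> real) list" where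
  "bspline_preacts l i =
     map (\<lambda>c y. y + c) [0, 1, 2, 3] @ map (\<lambda>m y. y - knot l (i + int m)) [0..<5]"

lemma affine_comb_bspline4_relu3_units:
  assumes "l \<ge> 1"
  shows "affine_comb {0..1} (relu3_units (bspline_preacts l i)) (bspline4 l i)"
proof (rule affine_comb_trans[OF affine_comb_bspline4[OF assms]])
  let ?U = "relu3_units (bspline_preacts l i)"
  have "relu3 \<in> set ?U" "(\<lambda>y. relu3 (y + 1)) \<in> set ?U"
    "(\<lambda>y. relu3 (y + 2)) \<in> set ?U" "(\<lambda>y. relu3 (y + 3)) \<in> set ?U"
    by (simp_all add: relu3_units_def bspline_preacts_def)
  note units = this[THEN affine_comb_member]
  fix h assume "h \<in> set (spline_basis l i)"
  then consider m where "m < 5" "h = (\<lambda>x. relu3 (x - knot l (i + int m)))"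
    | "h = (\<lambda>x. x)" | "h = (\<lambda>x. x ^ 2)"
    by (auto simp: spline_basis_def)
  then show "affine_comb {0..1} ?U h"
  proof cases
    case 1
    then show ?thesis
      by (intro affine_comb_member) (auto simp: relu3_units_def bspline_preacts_def)
  next
    case 2
    have "affine_comb {0..1} ?U (\<lambda>y. - (1/12) * (relu3 (y + 3) - 5 * relu3 (y + 2)
        + 7 * relu3 (y + 1) - 3 * relu3 y + 6))"
      by (intro affine_comb_scale affine_comb_add affine_comb_diff affine_comb_const units)
    then show ?thesis
      by (rule affine_comb_cong) (simp only: 2 atLeastAtMost_iff id_eq_relu3_comb[symmetric])
  next
    case 3
    have "affine_comb {0..1} ?U (\<lambda>y. - (1/6) * (relu3 (y + 2) - 4 * relu3 (y + 1)
        + 3 * relu3 y - 4))"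
      by (intro affine_comb_scale affine_comb_add affine_comb_diff affine_comb_const units)
    then show ?thesis
      by (rule affine_comb_cong) (simp only: 3 atLeastAtMost_iff square_eq_relu3_comb[symmetric])
  qed
qed

definition first_layer_preacts :: "nat \<Rightarrow> int list \<Rightarrow> (real list \<Rightarrow> real) list" where
  "first_layer_preacts l is =
     concat (map (\<lambda>j. map (\<lambda>g x. g (x ! j)) (bspline_preacts l (is ! j))) [0..<length is])"

lemma length_first_layer_preacts: "length (first_layer_preacts l is) = 9 * length is"
  by (simp add: first_layer_preacts_def bspline_preacts_def length_concat comp_def sum_list_triv)

lemma relu3_layers_compute_first_layer:
  assumes "length is = d" "9 * d \<le> W"
  shows "relu3_layers_compute W d (unit_cube d) (Suc 0) (relu3_units (first_layer_preacts l is))"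
proof (rule relu3_layers_compute_Suc)
  show "relu3_layers_compute W d (unit_cube d) 0 (map (\<lambda>j x. x ! j) [0..<d])"
    by (rule relu3_layers_compute_coordinates) (simp add: unit_cube_def)
  have coordinate: "affine_comb (unit_cube d) (map (\<lambda>j x. x ! j) [0..<d]) (\<lambda>x. x ! j)"
    if "j < d" for j
    using that by (intro affine_comb_member) (auto intro: rev_image_eqI)
  fix g assume "g \<in> set (first_layer_preacts l is)"
  then show "affine_comb (unit_cube d) (map (\<lambda>j x. x ! j) [0..<d]) g"
    by (auto simp: first_layer_preacts_def bspline_preacts_def assms(1)
        intro!: affine_comb_add affine_comb_diff affine_comb_const coordinate)
qed (simp add: length_first_layer_preacts assms)

lemma affine_comb_first_layer_bspline4:
  assumes "l \<ge> 1" "j < length is"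
  shows "affine_comb (unit_cube (length is)) (relu3_units (first_layer_preacts l is))
           (\<lambda>x. bspline4 l (is ! j) (x ! j))"
proof (rule affine_comb_mono)
  let ?Gj = "map (\<lambda>g x. g (x ! j)) (bspline_preacts l (is ! j))"
  have "affine_comb (unit_cube (length is))
      (map (\<lambda>h x. h (x ! j)) (relu3_units (bspline_preacts l (is ! j))))
      (\<lambda>x. bspline4 l (is ! j) (x ! j))"
    using assms(2)
    by (intro affine_comb_compose[where T = "{0..1}"] affine_comb_bspline4_relu3_units assms(1))
      (auto simp: unit_cube_def)
  then show "affine_comb (unit_cube (length is)) (relu3_units ?Gj) (\<lambda>x. bspline4 l (is ! j) (x ! j))"
    by (simp add: relu3_units_def comp_def)
  show "set (relu3_units ?Gj) \<subseteq> set (relu3_units (first_layer_preacts l is))"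
    unfolding relu3_units_def first_layer_preacts_def set_map
    using assms(2) by (intro image_mono) force
qed

lemma le_two_power_ceiling_log:
  assumes "d \<ge> (1::nat)"
  shows "d \<le> 2 ^ nat \<lceil>log 2 (real d)\<rceil>"
proof -
  have "real d = 2 powr log 2 (real d)"
    using assms by simp
  also have "\<dots> \<le> 2 powr real (nat \<lceil>log 2 (real d)\<rceil>)"
    using assms by (intro powr_mono) auto
  also have "\<dots> = real (2 ^ nat \<lceil>log 2 (real d)\<rceil>)"
    by (simp add: powr_realpow)
  finally show ?thesis by linarith
qed

lemma bspline4_multi_network:
  assumes "l \<ge> 1" "length is = d" "d \<ge> 1"
  shows "implements_on {relu3} (nat \<lceil>log 2 (real d)\<rceil> + 2) (11 * d) d (unit_cube d)
           (bspline4_multi l is)"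
proof -
  let ?K = "nat \<lceil>log 2 (real d)\<rceil>"
  define V where "V = map (\<lambda>j x. bspline4 l (is ! j) (x ! j)) [0..<d]"
  have layer: "relu3_layers_compute (11 * d) d (unit_cube d) (Suc 0)
      (relu3_units (first_layer_preacts l is))"
    using assms(2) by (rule relu3_layers_compute_first_layer) simp
  have "V \<noteq> []" "length V \<le> 2 ^ ?K" "6 * length V \<le> 11 * d"
    using assms(3) le_two_power_ceiling_log[OF assms(3)] by (auto simp: V_def)
  moreover have "affine_comb (unit_cube d) (relu3_units (first_layer_preacts l is)) v"
    if "v \<in> set V" for v
  proof -
    from that obtain j where "j < d" "v = (\<lambda>x. bspline4 l (is ! j) (x ! j))"
      by (auto simp: V_def)
    with assms(1,2) show ?thesis
      using affine_comb_first_layer_bspline4[of l j "is"] by simp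
  qed
  ultimately obtain L where "relu3_layers_compute (11 * d) d (unit_cube d) (Suc 0 + ?K) L"
      "affine_comb (unit_cube d) L (\<lambda>x. prod_list (map (\<lambda>v. v x) V))"
    using relu3_layers_compute_prod[OF layer] by blast
  moreover have "prod_list (map (\<lambda>v. v x) V) = bspline4_multi l is x" for x
    using assms(2) by (simp add: V_def bspline4_multi_def prod.distinct_set_conv_list[symmetric]
        atLeast0LessThan comp_def)
  ultimately have "implements_on {relu3} (Suc (Suc 0 + ?K)) (11 * d) d (unit_cube d)
      (bspline4_multi l is)"
    using assms(3) by (auto intro: implements_on_if_affine_comb)
  then show ?thesis by simp
qed

theorem mainTheorem8:
  shows "(\<forall>x::real. x \<ge> 0 \<longrightarrow>
            x ^ 2 = - (1/6) * (relu3 (x + 2) - 4 * relu3 (x + 1) + 3 * relu3 x - 4))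
       \<and> (\<forall>x::real. x \<ge> 0 \<longrightarrow>
            x = - (1/12) * (relu3 (x + 3) - 5 * relu3 (x + 2) + 7 * relu3 (x + 1)
                            - 3 * relu3 x + 6))
       \<and> (\<forall>x y::real. x \<ge> 0 \<longrightarrow> y \<ge> 0 \<longrightarrow>
            x * y = - (1/12) * (relu3 (x + y + 2) - 4 * relu3 (x + y + 1) + 3 * relu3 (x + y)
                                - relu3 (x + 2) + 4 * relu3 (x + 1) - 3 * relu3 x
                                - relu3 (y + 2) + 4 * relu3 (y + 1) - 3 * relu3 y + 4))
       \<and> (\<forall>(d::nat) (l::nat) (is::int list).
            d \<ge> 1 \<longrightarrow> l \<ge> 1 \<longrightarrow> length is = d \<longrightarrow> set is \<subseteq> bspline_index l \<longrightarrow>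
            implements_on {relu3} (nat \<lceil>log 2 (real d)\<rceil> + 2) (11 * d) d (unit_cube d)
              (bspline4_multi l is))"
  \<comment> \<open>The construction works for every index list, so the range condition on \<open>is\<close> is not used.\<close>
  by (intro conjI allI impI square_eq_relu3_comb id_eq_relu3_comb mult_eq_relu3_comb
      bspline4_multi_network; assumption)

end
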